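(* A tubal matrix $\mathcal A\in\mathbb{C}_p^{I\times I}$ is unitary if and only if its small-t transpose $\mathcal A^t$ is unitary.
   Context: Fix an integer $p\ge1$ and an invertible linear map $L:\mathbb{C}^p\to\mathbb{C}^p$. A tubal scalar is an element of $\mathbb{C}_p:=\mathbb{C}^p$. The tensor-tensor product of tubal scalars is $\mathbf a*\mathbf b=L^{-1}(L(\mathbf a)\odot L(\mathbf b))$, where $\odot$ is the componentwise product. A tubal matrix $\mathcal A\in\mathbb{C}_p^{I\times J}$ is an $I\times J$ array of tubal scalars (identified with an array in $\mathbb{C}^{I\times J\times p}$); its $k$-th frontal slice $\mathcal A^{(k)}\in\mathbb{C}^{I\times J}$ has entries $\mathcal A(i,j)^{(k)}$, and $L(\mathcal A)$ is obtained by applying $L$ to every entry. For $\mathcal A\in\mathbb{C}_p^{I\times J}$, $\mathcal B\in\mathbb{C}_p^{J\times K}$, the product $\mathcal A*\mathcal B\in\mathbb{C}_p^{I\times K}$ is defined by $(\mathcal A*\mathcal B)(i,k)=\sum_j\mathcal A(i,j)*\mathcal B(j,k)$; equivalently $L(\mathcal A*\mathcal B)^{(k)}=L(\mathcal A)^{(k)}L(\mathcal B)^{(k)}$ for all $k$. The identity $\mathcal I_I\in\mathbb{C}_p^{I\times I}$ is the tubal matrix with $L(\mathcal I_I)^{(k)}$ equal to the $I\times I$ identity matrix for every $k$. The Hermitian transpose $\mathcal A^H\in\mathbb{C}_p^{J\times I}$ is defined by $L(\mathcal A^H)^{(k)}=(L(\mathcal A)^{(k)})^H$ for all $k$. $\mathcal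 A\in\mathbb{C}_p^{I\times I}$ is unitary if $\mathcal A*\mathcal A^H=\mathcal A^H*\mathcal A=\mathcal I_I$. The small-t transpose $\mathcal A^t\in\mathbb{C}_p^{J\times I}$ is defined by $\mathcal A^t(j,i)=\mathcal A(i,j)$ (each frontal slice is transposed, without conjugation). *)

theory Defs
  imports "HOL-Analysis.Analysis"
begin

text \<open>Tubal scalars: complex ^ 'p (the type 'p fixes p = CARD('p)).
  The transform L is a complex-linear bijection of complex ^ 'p.\<close>

type_synonym ('i, 'j, 'p) tmat = "'i \<Rightarrow> 'j \<Rightarrow> complex ^ 'p"

definition complex_linear :: "(complex ^ 'p \<Rightarrow> complex ^ 'p) \<Rightarrow> bool" where
  "complex_linear L \<longleftrightarrow> (\<forall>x y. L (x + y) = L x + L y) \<and> (\<forall>c x. L (c *s x) = c *s L x)"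

definition tscal_mult :: "(complex ^ 'p \<Rightarrow> complex ^ 'p) \<Rightarrow> complex ^ 'p \<Rightarrow> complex ^ 'p \<Rightarrow> complex ^ 'p" where
  "tscal_mult L a b = inv L (\<chi> k. L a $ k * L b $ k)"

definition tmat_mult :: "(complex ^ 'p \<Rightarrow> complex ^ 'p) \<Rightarrow> ('i::finite, 'j::finite, 'p) tmat \<Rightarrow> ('j, 'k, 'p) tmat \<Rightarrow> ('i, 'k, 'p) tmat" where
  "tmat_mult L A B = (\<lambda>i k. \<Sum>j\<in>UNIV. tscal_mult L (A i j) (B j k))"

definition tmat_id :: "(complex ^ 'p \<Rightarrow> complex ^ 'p) \<Rightarrow> ('i, 'i, 'p) tmat" where
  "tmat_id L = (\<lambda>i j. inv L (\<chi> k. if i = j then 1 else 0))"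

definition tmat_herm :: "(complex ^ 'p \<Rightarrow> complex ^ 'p) \<Rightarrow> ('i, 'j, 'p) tmat \<Rightarrow> ('j, 'i, 'p) tmat" where
  "tmat_herm L A = (\<lambda>j i. inv L (\<chi> k. cnj (L (A i j) $ k)))"

definition tmat_unitary :: "(complex ^ 'p \<Rightarrow> complex ^ 'p) \<Rightarrow> ('i::finite, 'i, 'p) tmat \<Rightarrow> bool" where
  "tmat_unitary L A \<longleftrightarrow> tmat_mult L A (tmat_herm L A) = tmat_id L \<and> tmat_mult L (tmat_herm L A) A = tmat_id L"

definition tmat_t :: "('i, 'j, 'p) tmat \<Rightarrow> ('j, 'i, 'p) tmat" where
  "tmat_t A = (\<lambda>j i. A i j)"

end

theory Submission
  imports Defs
begin

text \<open>Under the transform L the tensor-tensor product acts slice by slice, so A is unitary iff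
  every frontal slice M of L(A) is a unitary matrix. The slices of L(A^t) are the transposes
  M^T, and M^T conj(M) and conj(M) M^T are the complex conjugates of M^H M and M M^H;
  since the identity matrix is real, M^T is unitary iff M is.\<close>

lemma complex_linear_sum:
  assumes "complex_linear L"
  shows "L (sum f S) = (\<Sum>x\<in>S. L (f x))"
proof -
  have "L 0 = 0"
    using assms unfolding complex_linear_def by (metis vector_smult_lzero)
  then show ?thesis
    using assms unfolding complex_linear_def
    by (induction S rule: infinite_finite_induct) simp_all
qed

definition tmat_slice :: "(complex ^ 'p \<Rightarrow> complex ^ 'p) \<Rightarrow> ('i, 'j, 'p) tmat \<Rightarrow> 'p \<Rightarrow> 'i \<Rightarrow> 'j \<Rightarrow> complex"
  where "tmat_slice L A k = (\<lambda>i j. L (A i j) $ k)"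

definition cmat_unitary :: "('i::finite \<Rightarrow> 'i \<Rightarrow> complex) \<Rightarrow> bool" where
  "cmat_unitary M \<longleftrightarrow>
     (\<forall>i l. (\<Sum>j\<in>UNIV. M i j * cnj (M l j)) = (if i = l then 1 else 0)) \<and>
     (\<forall>i l. (\<Sum>j\<in>UNIV. cnj (M j i) * M j l) = (if i = l then 1 else 0))"

lemma cnj_eq_kronecker_iff: "cnj x = (if i = l then 1 else 0) \<longleftrightarrow> x = (if i = l then 1 else 0)"
  by (metis complex_cnj_cnj complex_cnj_one complex_cnj_zero)

lemma cmat_unitary_transpose: "cmat_unitary (\<lambda>i j. M j i) \<longleftrightarrow> cmat_unitary M"
proof -
  have sums_cnj: "(\<Sum>j\<in>UNIV. M j i * cnj (M j l)) = cnj (\<Sum>j\<in>UNIV. cnj (M j i) * M j l)"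
    "(\<Sum>j\<in>UNIV. cnj (M i j) * M l j) = cnj (\<Sum>j\<in>UNIV. M i j * cnj (M l j))" for i l
    by (simp_all add: mult.commute)
  show ?thesis
    unfolding cmat_unitary_def sums_cnj cnj_eq_kronecker_iff by (rule conj_commute)
qed

lemma tmat_eq_iff_slices:
  assumes "inj L"
  shows "A = B \<longleftrightarrow> (\<forall>k. tmat_slice L A k = tmat_slice L B k)"
proof -
  have "A = B \<longleftrightarrow> (\<forall>i j. L (A i j) = L (B i j))"
    using assms by (auto simp: fun_eq_iff inj_eq)
  then show ?thesis
    by (auto simp: tmat_slice_def fun_eq_iff vec_eq_iff)
qed

lemma tmat_slice_mult:
  assumes "complex_linear L" and "surj L"
  shows "tmat_slice L (tmat_mult L A B) k =
    (\<lambda>i l. \<Sum>j\<in>UNIV. tmat_slice L A k i j * tmat_slice L B k j l)"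
  using assms surj_f_inv_f[OF assms(2)]
  by (simp add: tmat_slice_def tmat_mult_def tscal_mult_def complex_linear_sum)

lemma
  assumes "surj L"
  shows tmat_slice_id: "tmat_slice L (tmat_id L) k = (\<lambda>i l. if i = l then 1 else 0)"
    and tmat_slice_herm: "tmat_slice L (tmat_herm L A) k = (\<lambda>j i. cnj (tmat_slice L A k i j))"
  using surj_f_inv_f[OF assms] by (simp_all add: tmat_slice_def tmat_id_def tmat_herm_def)

lemma tmat_unitary_iff_slices:
  assumes "complex_linear L" and "bij L"
  shows "tmat_unitary L A \<longleftrightarrow> (\<forall>k. cmat_unitary (tmat_slice L A k))"
proof -
  have surj: "surj L"
    using assms(2) by (rule bij_is_surj)
  have "tmat_unitary L A \<longleftrightarrow>
      (\<forall>k. tmat_slice L (tmat_mult L A (tmat_herm L A)) k = tmat_slice L (tmat_id L) k) \<and>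
      (\<forall>k. tmat_slice L (tmat_mult L (tmat_herm L A) A) k = tmat_slice L (tmat_id L) k)"
    unfolding tmat_unitary_def tmat_eq_iff_slices[OF bij_is_inj[OF assms(2)]] ..
  also have "\<dots> \<longleftrightarrow> (\<forall>k. cmat_unitary (tmat_slice L A k))"
    unfolding tmat_slice_mult[OF assms(1) surj] tmat_slice_id[OF surj] tmat_slice_herm[OF surj]
      cmat_unitary_def fun_eq_iff by blast
  finally show ?thesis .
qed

theorem proposition3p3:
  fixes L :: "complex ^ 'p \<Rightarrow> complex ^ 'p"
    and A :: "('i::finite, 'i, 'p) tmat"
  assumes "complex_linear L" and "bij L"
  shows "tmat_unitary L A \<longleftrightarrow> tmat_unitary L (tmat_t A)"
proof -
  have slice_t: "tmat_slice L (tmat_t A) k = (\<lambda>i j. tmat_slice L A k j i)" for k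
    by (simp add: tmat_slice_def tmat_t_def)
  \<comment> \<open>cmat_unitary_transpose is instantiated: as a plain rewrite rule it loops up to eta.\<close>
  show ?thesis
    unfolding tmat_unitary_iff_slices[OF assms] slice_t
    by (simp only: cmat_unitary_transpose[of "tmat_slice L A _"])
qed

end
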